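(* Let $\Gamma$ be a simplicial complex on $V_1=\{x_1,\ldots,x_n\}$ with $m$ facets. Let $G_1,\ldots,G_m\subseteq V_1$ be such that each $V_1\setminus G_j$ is a face of $\Gamma$ and every facet of $\Gamma$ is of the form $V_1\setminus G_j$ for some $j$. Let $y_1,\ldots,y_m$ be new vertices, let $\Delta_{V_1}$ be the $(n-1)$-simplex on $x_1,\ldots,x_n$, and define \[\Delta'=\left\{\sigma\cup\tau:\ \sigma\in\Gamma,\ \tau\subseteq\{y_j:\sigma\subseteq V_1\setminus G_j\}\right\},\qquad \Delta=\Delta'\cup\Delta_{V_1}.\] Let $I$ be the Stanley--Reisner ideal of $\Delta$ in $R=\Bbbk[x_1,\ldots,x_n,y_1,\ldots,y_m]$ ($\Bbbk$ a field), and let $I_\Gamma$ be the extension to $R$ of the Stanley--Reisner ideal of $\Gamma$ in $\Bbbk[x_1,\ldots,x_n]$. Then $I=(x_iy_j: 1\leq j\leq m,\ x_i\in G_j)$, $I=(I+I_\Gamma)\cap(y_1,\ldots,y_m)$, and the Stanley--Reisner ideal of $\Delta'$ is $I+I_\Gamma$.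
   Context: The Stanley--Reisner ideal of a simplicial complex $\Delta$ on a vertex set $V$ (the variables of a polynomial ring) is the ideal generated by the monomials $\prod_{x\in F}x$ for $F\subseteq V$ not a face of $\Delta$. *)

theory Defs
  imports "HOL-Library.Poly_Mapping"
begin

text \<open>Multivariate polynomials over 'k in the variables of type 'v:
  finitely supported maps from exponent vectors to coefficients.\<close>

type_synonym ('v, 'k) mpoly = "('v \<Rightarrow>\<^sub>0 nat) \<Rightarrow>\<^sub>0 'k"

definition var :: "'v \<Rightarrow> ('v, 'k::comm_ring_1) mpoly" where
  "var x = Poly_Mapping.single (Poly_Mapping.single x 1) 1"

definition sqmono :: "'v set \<Rightarrow> ('v, 'k::comm_ring_1) mpoly" where
  "sqmono F = (\<Prod>x\<in>F. var x)"

definition gen_ideal :: "'a::comm_ring_1 set \<Rightarrow> 'a set" where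
  "gen_ideal S = {r. \<exists>F c. finite F \<and> F \<subseteq> S \<and> r = (\<Sum>s\<in>F. c s * s)}"

definition ideal_sum :: "'a::comm_ring_1 set \<Rightarrow> 'a set \<Rightarrow> 'a set" where
  "ideal_sum I J = {a + b | a b. a \<in> I \<and> b \<in> J}"

definition simplicial_complex :: "'v set \<Rightarrow> 'v set set \<Rightarrow> bool" where
  "simplicial_complex V D \<longleftrightarrow> (\<forall>F\<in>D. F \<subseteq> V) \<and> (\<forall>F\<in>D. \<forall>G. G \<subseteq> F \<longrightarrow> G \<in> D)"

definition facets :: "'v set set \<Rightarrow> 'v set set" where
  "facets D = {F \<in> D. \<forall>G\<in>D. F \<subseteq> G \<longrightarrow> G = F}"

definition SR_ideal :: "'v set \<Rightarrow> 'v set set \<Rightarrow> ('v, 'k::comm_ring_1) mpoly set" where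
  "SR_ideal V D = gen_ideal {sqmono F | F. F \<subseteq> V \<and> F \<notin> D}"

end

theory Submission
  imports Defs "HOL.Modules"
begin

(*
  A vertex set F is a nonface of Delta exactly when it contains a pair {x, y_j} with x in G_j:
  such an F is not inside X, so it contains some y_j; if F \<inter> X is not a face of Gamma it is
  not inside the face X - G_j, and otherwise F \<notin> Delta' forces F \<inter> X to leave X - G_k
  for some y_k in F.  This gives the generators of I, and the nonfaces of Delta' are those
  of Delta together with those of Gamma.  For I = (I + I_Gamma) \<inter> (y_1, ..., y_m), setting
  all y_j to zero is a ring endomorphism that kills (y_1, ..., y_m) and fixes the monomial
  generators x^sigma of I_Gamma; hence I_Gamma \<inter> (y_1, ..., y_m) is generated by the
  products y_j x^sigma, which are nonface monomials of Delta.
*)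

interpretation ring_ideal: module "(*) :: 'a::comm_ring_1 \<Rightarrow> 'a \<Rightarrow> 'a"
  by unfold_locales (simp_all add: algebra_simps)

lemma gen_ideal_eq_span: "gen_ideal S = ring_ideal.span S"
  unfolding gen_ideal_def ring_ideal.span_explicit by blast

lemma gen_ideal_base: "s \<in> S \<Longrightarrow> s \<in> gen_ideal S"
  by (simp add: gen_ideal_eq_span ring_ideal.span_base)

lemma gen_ideal_zero: "0 \<in> gen_ideal S"
  by (simp add: gen_ideal_eq_span ring_ideal.span_zero)

lemma gen_ideal_add: "a \<in> gen_ideal S \<Longrightarrow> b \<in> gen_ideal S \<Longrightarrow> a + b \<in> gen_ideal S"
  by (simp add: gen_ideal_eq_span ring_ideal.span_add)

lemma gen_ideal_diff: "a \<in> gen_ideal S \<Longrightarrow> b \<in> gen_ideal S \<Longrightarrow> a - b \<in> gen_ideal S"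
  by (simp add: gen_ideal_eq_span ring_ideal.span_diff)

lemma gen_ideal_mult_left: "a \<in> gen_ideal S \<Longrightarrow> r * a \<in> gen_ideal S"
  using ring_ideal.span_scale by (simp add: gen_ideal_eq_span)

lemma gen_ideal_sum: "(\<And>i. i \<in> A \<Longrightarrow> f i \<in> gen_ideal S) \<Longrightarrow> sum f A \<in> gen_ideal S"
  by (simp add: gen_ideal_eq_span ring_ideal.span_sum)

lemma gen_ideal_mono: "S \<subseteq> gen_ideal T \<Longrightarrow> gen_ideal S \<subseteq> gen_ideal T"
  unfolding gen_ideal_eq_span by (rule ring_ideal.span_minimal) auto

lemma gen_ideal_mult_right:
  assumes "t \<in> gen_ideal T" and "\<And>s. s \<in> T \<Longrightarrow> s * u \<in> gen_ideal W"
  shows "t * u \<in> gen_ideal W"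
proof -
  have "t \<in> ring_ideal.span T" using assms(1) by (simp add: gen_ideal_eq_span)
  then show ?thesis
  proof (induction rule: ring_ideal.span_induct_alt)
    case base
    show ?case by (simp add: gen_ideal_zero)
  next
    case (step c s t)
    have "(c * s + t) * u = c * (s * u) + t * u"
      by (simp add: distrib_right)
    also have "\<dots> \<in> gen_ideal W"
      using assms(2)[OF step.hyps(1)] step.IH by (blast intro: gen_ideal_add gen_ideal_mult_left)
    finally show ?case .
  qed
qed

lemma ideal_sum_gen_ideal: "ideal_sum (gen_ideal A) (gen_ideal B) = gen_ideal (A \<union> B)"
  by (simp add: ideal_sum_def gen_ideal_eq_span ring_ideal.span_Un)

lemma ideal_sum_Int_gen_ideal:
  assumes "gen_ideal A \<subseteq> gen_ideal C" and "gen_ideal B \<inter> gen_ideal C \<subseteq> gen_ideal A"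
  shows "ideal_sum (gen_ideal A) (gen_ideal B) \<inter> gen_ideal C = gen_ideal A"
proof
  show "gen_ideal A \<subseteq> ideal_sum (gen_ideal A) (gen_ideal B) \<inter> gen_ideal C"
    using assms(1) gen_ideal_zero unfolding ideal_sum_def by force
next
  show "ideal_sum (gen_ideal A) (gen_ideal B) \<inter> gen_ideal C \<subseteq> gen_ideal A"
  proof
    fix f assume "f \<in> ideal_sum (gen_ideal A) (gen_ideal B) \<inter> gen_ideal C"
    then obtain a b where f: "f = a + b" "f \<in> gen_ideal C" and a: "a \<in> gen_ideal A"
      and b: "b \<in> gen_ideal B" unfolding ideal_sum_def by blast
    have "b = f - a" using f by simp
    also have "\<dots> \<in> gen_ideal C" using f(2) a assms(1) by (blast intro: gen_ideal_diff)
    finally show "f \<in> gen_ideal A" using assms(2) a b f(1) by (blast intro: gen_ideal_add)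
  qed
qed

lemma sqmono_insert:
  "finite F \<Longrightarrow> x \<notin> F \<Longrightarrow> sqmono (insert x F) = var x * sqmono F"
  by (simp add: sqmono_def)

lemma sqmono_split:
  "finite F \<Longrightarrow> E \<subseteq> F \<Longrightarrow> sqmono F = sqmono (F - E) * sqmono E"
  unfolding sqmono_def by (metis mult.commute prod.subset_diff)

lemma sqmono_eq_single:
  "finite F \<Longrightarrow> sqmono F = Poly_Mapping.single (\<Sum>x\<in>F. Poly_Mapping.single x 1) 1"
  unfolding sqmono_def by (induction F rule: finite_induct) (simp_all add: var_def mult_single)

lemma poly_mapping_sum_single:
  "p = (\<Sum>k\<in>Poly_Mapping.keys p. Poly_Mapping.single k (Poly_Mapping.lookup p k))"
  by (rule poly_mapping_eqI) (auto simp: lookup_sum lookup_single when_def in_keys_iff)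

definition zero_vars :: "'v set \<Rightarrow> ('v, 'k::comm_ring_1) mpoly \<Rightarrow> ('v, 'k) mpoly" where
  "zero_vars W p =
     Poly_Mapping.mapp (\<lambda>e c. if \<forall>v\<in>W. Poly_Mapping.lookup e v = 0 then c else 0) p"

lemma lookup_zero_vars:
  "Poly_Mapping.lookup (zero_vars W p) e =
     (if \<forall>v\<in>W. Poly_Mapping.lookup e v = 0 then Poly_Mapping.lookup p e else 0)"
  by (simp add: zero_vars_def lookup_mapp when_def in_keys_iff)

interpretation zero_vars: additive "zero_vars W"
  by unfold_locales (rule poly_mapping_eqI, simp add: lookup_zero_vars lookup_add)

lemma zero_vars_single:
  "zero_vars W (Poly_Mapping.single e a) =
     (if \<forall>v\<in>W. Poly_Mapping.lookup e v = 0 then Poly_Mapping.single e a else 0)"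
  by (rule poly_mapping_eqI) (simp add: lookup_zero_vars lookup_single when_def)

lemma zero_vars_mult: "zero_vars W (p * q) = zero_vars W p * zero_vars W q"
proof -
  have single: "zero_vars W (Poly_Mapping.single k a * Poly_Mapping.single l b) =
      zero_vars W (Poly_Mapping.single k a) * zero_vars W (Poly_Mapping.single l b)"
    for k l :: "'a \<Rightarrow>\<^sub>0 nat" and a b :: 'b
    by (auto simp: mult_single zero_vars_single lookup_add)
  let ?terms = "\<lambda>p. \<Sum>k\<in>Poly_Mapping.keys p. Poly_Mapping.single k (Poly_Mapping.lookup p k)"
  have "zero_vars W (p * q) = zero_vars W (?terms p * ?terms q)"
    by (simp only: poly_mapping_sum_single[symmetric])
  also have "\<dots> = zero_vars W (?terms p) * zero_vars W (?terms q)"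
    by (simp add: sum_product zero_vars.sum single)
  also have "\<dots> = zero_vars W p * zero_vars W q"
    by (simp only: poly_mapping_sum_single[symmetric])
  finally show ?thesis .
qed

lemma zero_vars_var: "zero_vars W (var v) = (if v \<in> W then 0 else var v)"
  by (auto simp: var_def zero_vars_single lookup_single when_def)

lemma zero_vars_sqmono: "finite F \<Longrightarrow> F \<inter> W = {} \<Longrightarrow> zero_vars W (sqmono F) = sqmono F"
  by (auto simp: sqmono_eq_single zero_vars_single lookup_sum lookup_single when_def)

lemma diff_zero_vars_mem_var_ideal: "p - zero_vars W p \<in> gen_ideal (var ` W)"
proof -
  have single_term:
    "Poly_Mapping.single k a - zero_vars W (Poly_Mapping.single k a) \<in> gen_ideal (var ` W)" for k a
  proof (cases "\<forall>v\<in>W. Poly_Mapping.lookup k v = 0")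
    case True
    then show ?thesis by (simp add: zero_vars_single gen_ideal_zero)
  next
    case False
    then obtain v where v: "v \<in> W" "Poly_Mapping.lookup k v \<noteq> 0" by blast
    then have "k = (k - Poly_Mapping.single v 1) + Poly_Mapping.single v 1"
      by (intro poly_mapping_eqI) (auto simp: lookup_add lookup_minus lookup_single when_def)
    then have "Poly_Mapping.single k a = Poly_Mapping.single (k - Poly_Mapping.single v 1) a * var v"
      by (metis var_def mult_single mult.right_neutral)
    moreover have "zero_vars W (Poly_Mapping.single k a) = 0"
      using v by (auto simp: zero_vars_single)
    moreover have "var v \<in> gen_ideal (var ` W)" using v(1) by (intro gen_ideal_base) blast
    ultimately show ?thesis by (metis diff_zero gen_ideal_mult_left)
  qed
  have "p - zero_vars W p = (\<Sum>k\<in>Poly_Mapping.keys p.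
      Poly_Mapping.single k (Poly_Mapping.lookup p k)
      - zero_vars W (Poly_Mapping.single k (Poly_Mapping.lookup p k)))"
    by (subst (1 2) poly_mapping_sum_single) (simp add: zero_vars.sum sum_subtractf)
  also have "\<dots> \<in> gen_ideal (var ` W)" by (intro gen_ideal_sum single_term)
  finally show ?thesis .
qed

lemma mem_var_ideal_iff: "p \<in> gen_ideal (var ` W) \<longleftrightarrow> zero_vars W p = 0"
proof
  assume "p \<in> gen_ideal (var ` W)"
  then obtain F c where "F \<subseteq> var ` W" and p: "p = (\<Sum>s\<in>F. c s * s)"
    unfolding gen_ideal_def by blast
  then have "zero_vars W (c s * s) = 0" if "s \<in> F" for s
    using that by (auto simp: zero_vars_mult zero_vars_var)
  then show "zero_vars W p = 0" unfolding p zero_vars.sum by simp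
next
  assume "zero_vars W p = 0"
  then show "p \<in> gen_ideal (var ` W)"
    using diff_zero_vars_mem_var_ideal[of p W] by simp
qed

lemma monomial_ideal_Int_var_ideal:
  assumes monomials: "\<And>s. s \<in> S \<Longrightarrow> \<exists>\<sigma>. s = sqmono \<sigma> \<and> finite \<sigma> \<and> \<sigma> \<inter> W = {}"
  shows "gen_ideal S \<inter> gen_ideal (var ` W) \<subseteq> gen_ideal {var w * s | w s. w \<in> W \<and> s \<in> S}"
proof
  fix b assume b: "b \<in> gen_ideal S \<inter> gen_ideal (var ` W)"
  then obtain F c where F: "F \<subseteq> S" and b_eq: "b = (\<Sum>s\<in>F. c s * s)"
    unfolding gen_ideal_def by blast
  have "zero_vars W s = s" if "s \<in> F" for s
    using monomials[of s] that F zero_vars_sqmono by blast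
  then have "zero_vars W b = (\<Sum>s\<in>F. zero_vars W (c s) * s)"
    unfolding b_eq zero_vars.sum by (intro sum.cong) (simp_all add: zero_vars_mult)
  moreover have "zero_vars W b = 0" using b mem_var_ideal_iff by blast
  ultimately have "b = (\<Sum>s\<in>F. (c s - zero_vars W (c s)) * s)"
    unfolding b_eq by (simp add: left_diff_distrib sum_subtractf)
  also have "\<dots> \<in> gen_ideal {var w * s | w s. w \<in> W \<and> s \<in> S}"
  proof (rule gen_ideal_sum)
    fix s assume "s \<in> F"
    then show "(c s - zero_vars W (c s)) * s \<in> gen_ideal {var w * s | w s. w \<in> W \<and> s \<in> S}"
      using F by (blast intro: gen_ideal_mult_right[OF diff_zero_vars_mem_var_ideal] gen_ideal_base)
  qed
  finally show "b \<in> gen_ideal {var w * s | w s. w \<in> W \<and> s \<in> S}" .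
qed

lemma SR_ideal_eq_gen_ideal:
  assumes "finite V" and "E \<subseteq> Pow V"
    and nonface_iff: "\<And>F. F \<subseteq> V \<Longrightarrow> F \<notin> D \<longleftrightarrow> (\<exists>e\<in>E. e \<subseteq> F)"
  shows "SR_ideal V D = gen_ideal (sqmono ` E)"
proof
  show "SR_ideal V D \<subseteq> gen_ideal (sqmono ` E)"
    unfolding SR_ideal_def
  proof (rule gen_ideal_mono, safe)
    fix F assume "F \<subseteq> V" "F \<notin> D"
    then obtain e where e: "e \<in> E" "e \<subseteq> F" using nonface_iff by blast
    have "sqmono F = sqmono (F - e) * sqmono e"
      using e(2) \<open>F \<subseteq> V\<close> \<open>finite V\<close> by (blast intro: sqmono_split finite_subset)
    also have "\<dots> \<in> gen_ideal (sqmono ` E)" using e(1) by (blast intro: gen_ideal_mult_left gen_ideal_base)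
    finally show "sqmono F \<in> gen_ideal (sqmono ` E)" .
  qed
  have "e \<subseteq> V \<and> e \<notin> D" if "e \<in> E" for e
    using that assms(2) nonface_iff by blast
  then show "gen_ideal (sqmono ` E) \<subseteq> SR_ideal V D"
    unfolding SR_ideal_def by (intro gen_ideal_mono) (blast intro: gen_ideal_base)
qed

locale facet_extension =
  fixes X :: "'v set" and y :: "nat \<Rightarrow> 'v" and m :: nat
    and \<Gamma> :: "'v set set" and G :: "nat \<Rightarrow> 'v set"
  assumes finite_X: "finite X"
    and vertices: "(UNIV :: 'v set) = X \<union> y ` {..<m}"
    and disjoint: "X \<inter> y ` {..<m} = {}"
    and inj_y: "inj_on y {..<m}"
    and complex: "simplicial_complex X \<Gamma>"
    and G_subset: "\<And>j. j < m \<Longrightarrow> G j \<subseteq> X"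
    and complement_face: "\<And>j. j < m \<Longrightarrow> X - G j \<in> \<Gamma>"
begin

definition Delta' :: "'v set set" where
  "Delta' = {\<sigma> \<union> \<tau> | \<sigma> \<tau>. \<sigma> \<in> \<Gamma> \<and> \<tau> \<subseteq> {y j | j. j < m \<and> \<sigma> \<subseteq> X - G j}}"

definition Delta :: "'v set set" where
  "Delta = Delta' \<union> Pow X"

lemma finite_vertex_set: "finite (F :: 'v set)"
  using finite_X vertices by (metis finite_Un finite_imageI finite_lessThan finite_subset subset_UNIV)

lemma face_subset: "\<sigma> \<in> \<Gamma> \<Longrightarrow> \<sigma> \<subseteq> X"
  using complex by (simp add: simplicial_complex_def)

lemma face_downward_closed: "\<sigma> \<in> \<Gamma> \<Longrightarrow> \<tau> \<subseteq> \<sigma> \<Longrightarrow> \<tau> \<in> \<Gamma>"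
  using complex by (simp add: simplicial_complex_def)

lemma y_notin_X: "j < m \<Longrightarrow> y j \<notin> X"
  using disjoint by blast

lemma mem_Delta'_iff: "F \<in> Delta' \<longleftrightarrow> F \<inter> X \<in> \<Gamma> \<and> (\<forall>j<m. y j \<in> F \<longrightarrow> F \<inter> X \<subseteq> X - G j)"
proof
  assume "F \<in> Delta'"
  then obtain \<sigma> \<tau> where F: "F = \<sigma> \<union> \<tau>" and \<sigma>: "\<sigma> \<in> \<Gamma>"
    and \<tau>: "\<tau> \<subseteq> {y j | j. j < m \<and> \<sigma> \<subseteq> X - G j}"
    unfolding Delta'_def by blast
  have FX: "F \<inter> X = \<sigma>" using F \<tau> face_subset[OF \<sigma>] y_notin_X by blast
  have "\<sigma> \<subseteq> X - G j" if "j < m" "y j \<in> F" for j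
  proof -
    have "y j \<in> \<tau>" using F that face_subset[OF \<sigma>] y_notin_X by blast
    then obtain i where "y j = y i" "i < m" "\<sigma> \<subseteq> X - G i" using \<tau> by blast
    then show ?thesis using inj_y \<open>j < m\<close> by (metis inj_on_def lessThan_iff)
  qed
  then show "F \<inter> X \<in> \<Gamma> \<and> (\<forall>j<m. y j \<in> F \<longrightarrow> F \<inter> X \<subseteq> X - G j)" using FX \<sigma> by simp
next
  assume F: "F \<inter> X \<in> \<Gamma> \<and> (\<forall>j<m. y j \<in> F \<longrightarrow> F \<inter> X \<subseteq> X - G j)"
  have "F - X \<subseteq> {y j | j. j < m \<and> F \<inter> X \<subseteq> X - G j}"
    using F vertices by blast
  moreover have "F = (F \<inter> X) \<union> (F - X)" by blast
  ultimately show "F \<in> Delta'" unfolding Delta'_def using F by blast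
qed

lemma notin_Delta_iff: "F \<notin> Delta \<longleftrightarrow> (\<exists>j<m. \<exists>x\<in>G j. x \<in> F \<and> y j \<in> F)"
proof
  assume "F \<notin> Delta"
  then have not_X: "\<not> F \<subseteq> X" and not_Delta': "F \<notin> Delta'" unfolding Delta_def by auto
  then obtain j0 where j0: "j0 < m" "y j0 \<in> F" using vertices by blast
  show "\<exists>j<m. \<exists>x\<in>G j. x \<in> F \<and> y j \<in> F"
  proof (cases "F \<inter> X \<in> \<Gamma>")
    case True
    then obtain j where "j < m" "y j \<in> F" "\<not> F \<inter> X \<subseteq> X - G j"
      using not_Delta' mem_Delta'_iff by blast
    then show ?thesis by blast
  next
    case False
    then have "\<not> F \<inter> X \<subseteq> X - G j0" using face_downward_closed complement_face j0(1) by blast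
    then show ?thesis using j0 by blast
  qed
next
  assume "\<exists>j<m. \<exists>x\<in>G j. x \<in> F \<and> y j \<in> F"
  then show "F \<notin> Delta" unfolding Delta_def using mem_Delta'_iff y_notin_X G_subset by blast
qed

lemma notin_Delta'_iff: "F \<notin> Delta' \<longleftrightarrow> F \<notin> Delta \<or> (F \<subseteq> X \<and> F \<notin> \<Gamma>)"
proof -
  have "F \<subseteq> X \<Longrightarrow> F \<in> Delta' \<longleftrightarrow> F \<in> \<Gamma>"
    using mem_Delta'_iff[of F] y_notin_X by (auto simp: Int_absorb2)
  then show ?thesis unfolding Delta_def by blast
qed

lemma SR_ideal_Delta:
  "(SR_ideal UNIV Delta :: ('v, 'k::comm_ring_1) mpoly set) =
     gen_ideal {var x * var (y j) | x j. j < m \<and> x \<in> G j}"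
proof -
  let ?E = "{{x, y j} | x j. j < m \<and> x \<in> G j}"
  have "sqmono {x, y j} = var x * var (y j)" if "j < m" "x \<in> G j" for x j
  proof -
    have "x \<noteq> y j" using that G_subset y_notin_X by blast
    then show ?thesis by (simp add: sqmono_def)
  qed
  then have "(sqmono ` ?E :: ('v, 'k) mpoly set) = {var x * var (y j) | x j. j < m \<and> x \<in> G j}"
    by (auto simp: image_Collect) metis
  moreover have "(SR_ideal UNIV Delta :: ('v, 'k) mpoly set) = gen_ideal (sqmono ` ?E)"
    by (rule SR_ideal_eq_gen_ideal) (simp_all add: finite_vertex_set notin_Delta_iff, blast)
  ultimately show ?thesis by simp
qed

lemma SR_ideal_Delta':
  "(SR_ideal UNIV Delta' :: ('v, 'k::comm_ring_1) mpoly set) =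
     ideal_sum (SR_ideal UNIV Delta) (SR_ideal X \<Gamma>)"
proof -
  have "{sqmono F :: ('v, 'k) mpoly | F. F \<subseteq> UNIV \<and> F \<notin> Delta'} =
      {sqmono F | F. F \<subseteq> UNIV \<and> F \<notin> Delta} \<union> {sqmono F | F. F \<subseteq> X \<and> F \<notin> \<Gamma>}"
    using notin_Delta'_iff by blast
  then show ?thesis unfolding SR_ideal_def ideal_sum_gen_ideal by simp
qed

lemma SR_ideal_Delta_subset_var_ideal: "SR_ideal UNIV Delta \<subseteq> gen_ideal (var ` y ` {..<m})"
  unfolding SR_ideal_Delta by (rule gen_ideal_mono) (blast intro: gen_ideal_mult_left gen_ideal_base)

lemma SR_ideal_Gamma_Int_var_ideal:
  "(SR_ideal X \<Gamma> :: ('v, 'k::comm_ring_1) mpoly set) \<inter> gen_ideal (var ` y ` {..<m})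
     \<subseteq> SR_ideal UNIV Delta"
proof -
  let ?N = "{sqmono \<sigma> :: ('v, 'k) mpoly | \<sigma>. \<sigma> \<subseteq> X \<and> \<sigma> \<notin> \<Gamma>}"
  have "gen_ideal ?N \<inter> gen_ideal (var ` y ` {..<m}) \<subseteq>
      gen_ideal {var w * s | w s. w \<in> y ` {..<m} \<and> s \<in> ?N}"
    by (rule monomial_ideal_Int_var_ideal) (use finite_vertex_set disjoint in blast)
  also have "\<dots> \<subseteq> SR_ideal UNIV Delta"
    unfolding SR_ideal_def[of UNIV Delta]
  proof (rule gen_ideal_mono, safe)
    fix j \<sigma> assume j: "j < m" and \<sigma>: "\<sigma> \<subseteq> X" "\<sigma> \<notin> \<Gamma>"
    have "y j \<notin> \<sigma>" using \<sigma>(1) y_notin_X[OF j] by blast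
    then have "var (y j) * sqmono \<sigma> = (sqmono (insert (y j) \<sigma>) :: ('v, 'k) mpoly)"
      by (simp add: sqmono_insert finite_vertex_set)
    moreover have "insert (y j) \<sigma> \<notin> Delta"
      using mem_Delta'_iff[of "insert (y j) \<sigma>"] \<sigma> y_notin_X[OF j] unfolding Delta_def
      by (auto simp: Int_absorb2)
    ultimately show "var (y j) * sqmono \<sigma> \<in>
        gen_ideal {sqmono F :: ('v, 'k) mpoly | F. F \<subseteq> UNIV \<and> F \<notin> Delta}"
      by (blast intro: gen_ideal_base)
  qed
  finally show ?thesis unfolding SR_ideal_def[of X \<Gamma>] .
qed

lemma SR_ideal_Delta_eq_Int:
  "SR_ideal UNIV Delta =
     ideal_sum (SR_ideal UNIV Delta) (SR_ideal X \<Gamma>) \<inter> gen_ideal (var ` y ` {..<m})"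
  using SR_ideal_Delta_subset_var_ideal SR_ideal_Gamma_Int_var_ideal
  unfolding SR_ideal_def by (rule ideal_sum_Int_gen_ideal[symmetric])

end

theorem proposition4p5:
  fixes X :: "'v set" and y :: "nat \<Rightarrow> 'v" and m n :: nat
    and \<Gamma> :: "'v set set" and G :: "nat \<Rightarrow> 'v set"
    and \<Delta>' \<Delta> :: "'v set set"
    and I I\<Gamma> :: "('v, 'k::field) mpoly set"
  assumes X_fin: "finite X" and X_card: "card X = n"
    and vertices: "(UNIV :: 'v set) = X \<union> y ` {..<m}"
    and disj: "X \<inter> y ` {..<m} = {}"
    and y_inj: "inj_on y {..<m}"
    and cplx: "simplicial_complex X \<Gamma>"
    and m_facets: "card (facets \<Gamma>) = m"
    and G_sub: "\<forall>j<m. G j \<subseteq> X"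
    and G_face: "\<forall>j<m. X - G j \<in> \<Gamma>"
    and G_facets: "\<forall>F\<in>facets \<Gamma>. \<exists>j<m. F = X - G j"
    and \<Delta>'_def: "\<Delta>' = {\<sigma> \<union> \<tau> | \<sigma> \<tau>. \<sigma> \<in> \<Gamma> \<and> \<tau> \<subseteq> {y j | j. j < m \<and> \<sigma> \<subseteq> X - G j}}"
    and \<Delta>_def: "\<Delta> = \<Delta>' \<union> Pow X"
    and I_def: "I = SR_ideal UNIV \<Delta>"
    and I\<Gamma>_def: "I\<Gamma> = SR_ideal X \<Gamma>"
  shows "I = gen_ideal {var x * var (y j) | x j. j < m \<and> x \<in> G j}
     \<and> I = ideal_sum I I\<Gamma> \<inter> gen_ideal (var ` y ` {..<m})
     \<and> SR_ideal UNIV \<Delta>' = ideal_sum I I\<Gamma>"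
proof -
  interpret facet_extension X y m \<Gamma> G
    using X_fin vertices disj y_inj cplx G_sub G_face by unfold_locales auto
  have "\<Delta>' = Delta'" using \<Delta>'_def by (simp add: Delta'_def)
  then have "\<Delta> = Delta" using \<Delta>_def by (simp add: Delta_def)
  show ?thesis
    unfolding I_def I\<Gamma>_def \<open>\<Delta>' = Delta'\<close> \<open>\<Delta> = Delta\<close>
    using SR_ideal_Delta SR_ideal_Delta_eq_Int SR_ideal_Delta' by blast
qed

end
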